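(* For all $n\in\mathbb N=\{0,1,2,\dots\}$ and all integers $d\geq 1$, the rational fraction $$S_{n,d}=\sum_{k=0}^nU_{d-1}\circ T_{(d+1)^k}\prod_{j=0}^k\frac{1}{U_d\circ T_{(d+1)^j}}\in\mathbb Q(x)$$ satisfies the identity $$S_{n,d}^2-2xS_{n,d}+1=\left(\prod_{j=0}^n\frac{1}{U_d\circ T_{(d+1)^j}}\right)^2.$$
   Context: $T_n=T_n(x)$ and $U_n=U_n(x)$ denote the Chebyshev polynomials of the first and second kind, defined by $T_0=1$, $T_1=x$, $T_{n+1}=2xT_n-T_{n-1}$ and $U_0=1$, $U_1=2x$, $U_{n+1}=2xU_n-U_{n-1}$ for $n\geq1$. The symbol $\circ$ denotes composition of polynomials, so $U_{d}\circ T_m$ is $U_d(T_m(x))$. *)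

theory Defs
  imports "HOL-Computational_Algebra.Computational_Algebra"
begin

fun cheb_T :: "nat \<Rightarrow> rat poly" where
  "cheb_T 0 = 1"
| "cheb_T (Suc 0) = [:0, 1:]"
| "cheb_T (Suc (Suc n)) = [:0, 2:] * cheb_T (Suc n) - cheb_T n"

fun cheb_U :: "nat \<Rightarrow> rat poly" where
  "cheb_U 0 = 1"
| "cheb_U (Suc 0) = [:0, 2:]"
| "cheb_U (Suc (Suc n)) = [:0, 2:] * cheb_U (Suc n) - cheb_U n"

definition rf :: "rat poly \<Rightarrow> rat poly fract" where
  "rf p = Fract p 1"

definition S :: "nat \<Rightarrow> nat \<Rightarrow> rat poly fract" where
  "S n d = (\<Sum>k=0..n. rf (pcompose (cheb_U (d - 1)) (cheb_T ((d + 1) ^ k))) *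
              (\<Prod>j=0..k. 1 / rf (pcompose (cheb_U d) (cheb_T ((d + 1) ^ j)))))"

end

theory Submission
  imports Defs
begin

text \<open>
  Put \<open>V_j = U_d \<circ> T_{(d+1)^j}\<close>, \<open>W_j = U_{d-1} \<circ> T_{(d+1)^j}\<close>, \<open>Y_j = T_{(d+1)^j}\<close> and
  \<open>P_n = \<Prod>_{j\<le>n} 1/V_j\<close>. Composing the Cassini-type identity
  \<open>U_d^2 - 2x U_d U_{d-1} + U_{d-1}^2 = 1\<close> with \<open>Y_j\<close> gives
  \<open>V_j^2 - 2 Y_j V_j W_j + W_j^2 = 1\<close>, and composing \<open>x U_d - U_{d-1} = T_{d+1}\<close> with \<open>Y_j\<close>
  gives \<open>Y_j V_j - W_j = Y_{j+1}\<close>, since \<open>T_a \<circ> T_b = T_{ab}\<close>. From these two relations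
  alone, induction on \<open>n\<close> proves the identity together with \<open>x - S_n = Y_{n+1} P_n\<close>;
  the quadratic identity by itself is not inductive.
\<close>

text \<open>The recurrences are restated with the factor \<open>2 * [:0, 1:]\<close> so that ring normalisation
  applies; for the same reason some proofs below disable \<open>mult_pCons_left/right\<close>, which would
  turn \<open>[:0, 1:] * p\<close> into \<open>pCons 0 p\<close>.\<close>

lemma cheb_T_Suc_Suc: "cheb_T (Suc (Suc n)) = 2 * [:0, 1:] * cheb_T (Suc n) - cheb_T n"
  by (simp add: numeral_poly)

lemma cheb_U_Suc_Suc: "cheb_U (Suc (Suc n)) = 2 * [:0, 1:] * cheb_U (Suc n) - cheb_U n"
  by (simp add: numeral_poly)

lemma cheb_U_Suc_0: "cheb_U (Suc 0) = 2 * [:0, 1:]"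
  by (simp add: numeral_poly)

declare cheb_T.simps(3)[simp del] cheb_U.simps(2,3)[simp del]
lemmas cheb_simps = cheb_T.simps(1,2) cheb_T_Suc_Suc cheb_U.simps(1) cheb_U_Suc_0 cheb_U_Suc_Suc

lemma cheb_T_recurrence:
  "k \<ge> 1 \<Longrightarrow> 2 * [:0, 1:] * cheb_T k = cheb_T (k + 1) + cheb_T (k - 1)"
  by (cases k rule: cheb_T.cases) (auto simp: cheb_simps)

lemma cheb_T_mult:
  "m \<le> n \<Longrightarrow> 2 * cheb_T m * cheb_T n = cheb_T (m + n) + cheb_T (n - m)"
proof (induction m arbitrary: n rule: cheb_T.induct)
  case 1
  then show ?case by simp
next
  case 2
  then show ?case using cheb_T_recurrence[of n] by (simp add: algebra_simps)
next
  case (3 k)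
  have IH1: "2 * cheb_T (Suc k) * cheb_T n = cheb_T (Suc k + n) + cheb_T (n - Suc k)"
    using 3 by simp
  have IH0: "2 * cheb_T k * cheb_T n = cheb_T (k + n) + cheb_T (n - k)"
    using 3 by simp
  have rec_sum: "2 * [:0, 1:] * cheb_T (Suc k + n) = cheb_T (Suc (Suc k) + n) + cheb_T (k + n)"
    using cheb_T_recurrence[of "Suc k + n"] by simp
  have rec_diff: "2 * [:0, 1:] * cheb_T (n - Suc k) = cheb_T (n - k) + cheb_T (n - Suc (Suc k))"
    using cheb_T_recurrence[of "n - Suc k"] 3(3) by (simp add: Suc_diff_Suc)
  have "2 * cheb_T (Suc (Suc k)) * cheb_T n
      = 2 * [:0, 1:] * (2 * cheb_T (Suc k) * cheb_T n) - 2 * cheb_T k * cheb_T n"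
    by (simp add: cheb_T_Suc_Suc algebra_simps)
  also have "\<dots> = 2 * [:0, 1:] * cheb_T (Suc k + n) + 2 * [:0, 1:] * cheb_T (n - Suc k)
      - (cheb_T (k + n) + cheb_T (n - k))"
    unfolding IH1 IH0 by (simp add: algebra_simps)
  also have "\<dots> = cheb_T (Suc (Suc k) + n) + cheb_T (n - Suc (Suc k))"
    by (simp only: rec_sum rec_diff)
  finally show ?case .
qed

lemma pcompose_numeral [simp]: "pcompose (numeral k) q = numeral k"
  by (simp add: numeral_poly)

lemma pcompose_power: "pcompose (p ^ n) q = pcompose p q ^ n"
  by (induction n) (simp_all add: pcompose_1 pcompose_mult)

lemma cheb_T_pcompose: "pcompose (cheb_T a) (cheb_T b) = cheb_T (a * b)"
proof (induction a rule: cheb_T.induct)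
  case 1
  then show ?case by (simp add: pcompose_1)
next
  case 2
  then show ?case by (simp add: pcompose_pCons)
next
  case (3 a)
  have "2 * cheb_T b * cheb_T (Suc a * b) = cheb_T (b + Suc a * b) + cheb_T (Suc a * b - b)"
    by (rule cheb_T_mult) simp
  then have rec: "cheb_T (Suc (Suc a) * b) = 2 * cheb_T b * cheb_T (Suc a * b) - cheb_T (a * b)"
    by (simp add: algebra_simps)
  show ?case
    using 3 unfolding rec cheb_T_Suc_Suc
    by (simp add: pcompose_diff pcompose_mult pcompose_pCons del: mult_Suc)
qed

lemma cheb_U_cassini:
  "cheb_U (Suc n) ^ 2 - 2 * [:0, 1:] * cheb_U (Suc n) * cheb_U n + cheb_U n ^ 2 = 1"
  by (induction n)
    (simp_all add: cheb_simps power2_eq_square algebra_simps del: mult_pCons_left mult_pCons_right)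

lemma cheb_T_Suc_Suc_eq_cheb_U:
  "[:0, 1:] * cheb_U (Suc n) - cheb_U n = cheb_T (Suc (Suc n))"
proof (induction n rule: cheb_T.induct)
  case (3 n)
  have "[:0, 1:] * cheb_U (Suc (Suc (Suc n))) - cheb_U (Suc (Suc n))
      = 2 * [:0, 1:] * ([:0, 1:] * cheb_U (Suc (Suc n)) - cheb_U (Suc n))
        - ([:0, 1:] * cheb_U (Suc n) - cheb_U n)"
    by (simp only: cheb_U_Suc_Suc) (simp add: algebra_simps)
  then show ?case
    using 3 by (simp add: cheb_T_Suc_Suc del: mult_pCons_left mult_pCons_right)
qed (simp_all add: cheb_simps algebra_simps)

lemma poly_cheb_T_1 [simp]: "poly (cheb_T k) 1 = 1"
  by (induction k rule: cheb_T.induct) (simp_all add: cheb_simps)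

lemma poly_cheb_U_1 [simp]: "poly (cheb_U k) 1 = of_nat (k + 1)"
  by (induction k rule: cheb_T.induct) (simp_all add: cheb_simps algebra_simps)

lemma pcompose_cheb_U_cheb_T_nonzero: "pcompose (cheb_U m) (cheb_T k) \<noteq> 0"
proof
  assume "pcompose (cheb_U m) (cheb_T k) = 0"
  then have "poly (pcompose (cheb_U m) (cheb_T k)) 1 = 0" by simp
  then show False by (simp add: poly_pcompose)
qed

lemma to_fract_power [simp]: "to_fract (x ^ n) = to_fract x ^ n"
  by (induction n) simp_all

lemma to_fract_of_nat [simp]: "to_fract (of_nat n) = of_nat n"
  by (induction n) simp_all

lemma to_fract_numeral [simp]: "to_fract (numeral k) = numeral k"
  using to_fract_of_nat[of "numeral k"] by simp

lemma rf_eq_to_fract: "rf = to_fract"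
  by (simp add: fun_eq_iff rf_def to_fract_def)

lemma quadratic_identity_step:
  fixes s x y v w q :: "'a::comm_ring_1"
  assumes cassini: "v\<^sup>2 - 2 * y * v * w + w\<^sup>2 = 1"
    and quad: "s\<^sup>2 - 2 * x * s + 1 = (q * v)\<^sup>2"
    and lin: "x - s = y * (q * v)"
  shows "(s + w * q)\<^sup>2 - 2 * x * (s + w * q) + 1 = q\<^sup>2"
    and "x - (s + w * q) = (y * v - w) * q"
proof -
  have s: "s = x - y * (q * v)"
    using lin by (simp add: algebra_simps)
  have x: "1 - x\<^sup>2 = q\<^sup>2 * v\<^sup>2 - y\<^sup>2 * q\<^sup>2 * v\<^sup>2"
    using quad unfolding s by (simp add: power2_eq_square algebra_simps)
  have "(s + w * q)\<^sup>2 - 2 * x * (s + w * q) + 1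
      = q\<^sup>2 * (w - y * v)\<^sup>2 + (1 - x\<^sup>2)"
    unfolding s by (simp add: power2_eq_square algebra_simps)
  also have "\<dots> = q\<^sup>2 * (v\<^sup>2 - 2 * y * v * w + w\<^sup>2)"
    unfolding x by (simp add: power2_eq_square algebra_simps)
  finally show "(s + w * q)\<^sup>2 - 2 * x * (s + w * q) + 1 = q\<^sup>2"
    using cassini by simp
  show "x - (s + w * q) = (y * v - w) * q"
    unfolding s by (simp add: algebra_simps)
qed

lemma quadratic_identity_partial_sums:
  fixes v w y :: "nat \<Rightarrow> 'a::field"
  assumes nonzero: "\<And>j. v j \<noteq> 0"
    and cassini: "\<And>j. (v j)\<^sup>2 - 2 * y j * v j * w j + (w j)\<^sup>2 = 1"
    and shift: "\<And>j. y j * v j - w j = y (Suc j)"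
  defines "p \<equiv> \<lambda>n. \<Prod>j=0..n. 1 / v j"
  defines "s \<equiv> \<lambda>n. \<Sum>k=0..n. w k * p k"
  shows "(s n)\<^sup>2 - 2 * y 0 * s n + 1 = (p n)\<^sup>2 \<and> y 0 - s n = y (Suc n) * p n"
proof (induction n)
  case 0
  have "s 0 = 0 + w 0 * p 0" "p 0 * v 0 = 1"
    using nonzero[of 0] by (simp_all add: s_def p_def)
  then show ?case
    using quadratic_identity_step[OF cassini[of 0], where s=0 and x="y 0" and q="p 0"] shift[of 0]
    by simp
next
  case (Suc n)
  have "s (Suc n) = s n + w (Suc n) * p (Suc n)"
    by (simp add: s_def)
  moreover have "p n = p (Suc n) * v (Suc n)"
    using nonzero[of "Suc n"] by (simp add: p_def)
  ultimately show ?case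
    using Suc quadratic_identity_step[OF cassini[of "Suc n"], where s="s n" and x="y 0" and q="p (Suc n)"]
      shift[of "Suc n"] by simp
qed

theorem theorem1p1:
  fixes n d :: nat
  assumes "d \<ge> 1"
  shows "(S n d)\<^sup>2 - 2 * rf [:0, 1:] * S n d + 1
           = (\<Prod>j=0..n. 1 / rf (pcompose (cheb_U d) (cheb_T ((d + 1) ^ j))))\<^sup>2"
proof -
  obtain e where d: "d = Suc e"
    using assms by (cases d) auto
  define V where "V j = to_fract (pcompose (cheb_U d) (cheb_T ((d + 1) ^ j)))" for j
  define W where "W j = to_fract (pcompose (cheb_U (d - 1)) (cheb_T ((d + 1) ^ j)))" for j
  define Y where "Y j = to_fract (cheb_T ((d + 1) ^ j))" for j
  have "V j \<noteq> 0" for j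
    by (simp add: V_def pcompose_cheb_U_cheb_T_nonzero)
  moreover have "(V j)\<^sup>2 - 2 * Y j * V j * W j + (W j)\<^sup>2 = 1" for j
    using arg_cong[OF cheb_U_cassini[of e], of "\<lambda>p :: rat poly. to_fract (pcompose p (cheb_T ((d + 1) ^ j)))"]
    by (simp add: V_def W_def Y_def d pcompose_diff pcompose_add pcompose_mult pcompose_power
        pcompose_1 pcompose_pCons)
  moreover have "Y j * V j - W j = Y (Suc j)" for j
    using arg_cong[OF cheb_T_Suc_Suc_eq_cheb_U[of e], of "\<lambda>p :: rat poly. to_fract (pcompose p (cheb_T ((d + 1) ^ j)))"]
    by (simp add: V_def W_def Y_def d pcompose_diff pcompose_mult pcompose_pCons cheb_T_pcompose)
  ultimately have "(S n d)\<^sup>2 - 2 * Y 0 * S n d + 1 = (\<Prod>j=0..n. 1 / V j)\<^sup>2"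
    using quadratic_identity_partial_sums[of V Y W n]
    by (simp add: S_def V_def W_def rf_eq_to_fract)
  then show ?thesis
    by (simp add: Y_def V_def rf_eq_to_fract)
qed

end
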